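(* Let $K$ be a field, $S=K[x_1,\ldots,x_n,y_1,\ldots,y_n]$ standard bigraded with $\deg x_i=(1,0)$, $\deg y_i=(0,1)$, let $>$ be the reverse lexicographic term order induced by $x_1>x_2>\cdots>x_n>y_1>\cdots>y_n$, and let $\phi:S\to S$ be the $K$-algebra homomorphism with $\phi(x_i)=x_i$ and $\phi(y_i)=x_i$. Let $f\in S$ be bihomogeneous of degree $(s,t)$ whose initial monomial is $\operatorname{in}(f)=x_{i_1}\cdots x_{i_s}y_{j_1}\cdots y_{j_t}$ with $i_1\leq\cdots\leq i_s\leq j_1\leq\cdots\leq j_t$. Then $\operatorname{in}(\phi(f))=\phi(\operatorname{in}(f))$ and $\operatorname{in}(f)=\phi(\operatorname{in}(f))^{(t)}$.
   Context: For a form $g=\sum_{1\le i_1\le\cdots\le i_e\le n}a_{i_1\cdots i_e}x_{i_1}\cdots x_{i_e}$ of degree $(e,0)$ and $0\le k\le e$, set $g^{(k)}=\sum a_{i_1\cdots i_e}x_{i_1}\cdots x_{i_{e-k}}y_{i_{e-k+1}}\cdots y_{i_e}$ (replace the $k$ variables with largest indices by the corresponding $y$'s); in particular for a monomial $x_{i_1}\cdots x_{i_e}$ with $i_1\le\cdots\le i_e$, its $(k)$-version is $x_{i_1}\cdots x_{i_{e-k}}y_{i_{e-k+1}}\cdots y_{i_e}$. $\operatorname{in}(\cdot)$ denotes the initial monomial with respect to $>$. *)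

theory Defs
  imports Main "HOL-Library.Poly_Mapping"
begin

text \<open>Variables of S = K[x_1..x_n, y_1..y_n]: X i stands for x_i, Y i for y_i (1 <= i <= n).\<close>

datatype var = X nat | Y nat

type_synonym mon = "var \<Rightarrow>\<^sub>0 nat"
type_synonym 'k mpoly = "mon \<Rightarrow>\<^sub>0 'k"

definition vars :: "nat \<Rightarrow> var set" where
  "vars n = X ` {1..n} \<union> Y ` {1..n}"

definition is_mon :: "nat \<Rightarrow> mon \<Rightarrow> bool" where
  "is_mon n m \<longleftrightarrow> Poly_Mapping.keys m \<subseteq> vars n"

definition is_poly :: "nat \<Rightarrow> 'k::zero mpoly \<Rightarrow> bool" where
  "is_poly n f \<longleftrightarrow> (\<forall>m\<in>Poly_Mapping.keys f. is_mon n m)"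

text \<open>Position of a variable in the order x_1 > ... > x_n > y_1 > ... > y_n
  (smaller rank = larger variable).\<close>
fun rank :: "nat \<Rightarrow> var \<Rightarrow> nat" where
  "rank n (X i) = i"
| "rank n (Y i) = n + i"

definition xdeg :: "nat \<Rightarrow> mon \<Rightarrow> nat" where
  "xdeg n m = (\<Sum>i\<in>{1..n}. Poly_Mapping.lookup m (X i))"

definition ydeg :: "nat \<Rightarrow> mon \<Rightarrow> nat" where
  "ydeg n m = (\<Sum>i\<in>{1..n}. Poly_Mapping.lookup m (Y i))"

definition tdeg :: "nat \<Rightarrow> mon \<Rightarrow> nat" where
  "tdeg n m = xdeg n m + ydeg n m"

definition revlex_gt :: "nat \<Rightarrow> mon \<Rightarrow> mon \<Rightarrow> bool" where
  "revlex_gt n m1 m2 \<longleftrightarrow>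
     tdeg n m1 > tdeg n m2 \<or>
     (tdeg n m1 = tdeg n m2 \<and>
      (\<exists>v\<in>vars n. Poly_Mapping.lookup m1 v < Poly_Mapping.lookup m2 v \<and>
         (\<forall>w\<in>vars n. rank n w > rank n v \<longrightarrow> Poly_Mapping.lookup m1 w = Poly_Mapping.lookup m2 w)))"

definition in_mon :: "nat \<Rightarrow> 'k::zero mpoly \<Rightarrow> mon" where
  "in_mon n f = (THE m. m \<in> Poly_Mapping.keys f \<and> (\<forall>m'\<in>Poly_Mapping.keys f. m' \<noteq> m \<longrightarrow> revlex_gt n m m'))"

definition bihom :: "nat \<Rightarrow> nat \<Rightarrow> nat \<Rightarrow> 'k::zero mpoly \<Rightarrow> bool" where
  "bihom n s t f \<longleftrightarrow> (\<forall>m\<in>Poly_Mapping.keys f. xdeg n m = s \<and> ydeg n m = t)"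

definition phi_mon :: "mon \<Rightarrow> mon" where
  "phi_mon m = Abs_poly_mapping
     (\<lambda>v. case v of X i \<Rightarrow> Poly_Mapping.lookup m (X i) + Poly_Mapping.lookup m (Y i) | Y i \<Rightarrow> 0)"

definition phi :: "'k::comm_monoid_add mpoly \<Rightarrow> 'k mpoly" where
  "phi f = (\<Sum>m\<in>Poly_Mapping.keys f. Poly_Mapping.single (phi_mon m) (Poly_Mapping.lookup f m))"

definition mon_of :: "var list \<Rightarrow> mon" where
  "mon_of vs = sum_list (map (\<lambda>v. Poly_Mapping.single v 1) vs)"

definition xindices :: "nat \<Rightarrow> mon \<Rightarrow> nat list" where
  "xindices n m = concat (map (\<lambda>i. replicate (Poly_Mapping.lookup m (X i)) i) [1..<n+1])"

text \<open>u^(k): replace the k variables with largest indices by the corresponding y's.\<close>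
definition upper :: "nat \<Rightarrow> nat \<Rightarrow> mon \<Rightarrow> mon" where
  "upper n k m = (let l = xindices n m; e = length l in
      mon_of (map X (take (e - k) l) @ map Y (drop (e - k) l)))"

end

theory Submission
  imports Defs "HOL-Library.Multiset"
begin

text \<open>Let u = in(f) = x_{i_1}..x_{i_s} y_{j_1}..y_{j_t}, whose x-indices are all below its
  y-indices, and let v be another monomial of f, so u > v. Let w be the smallest variable in
  which u and v differ. If w = x_k, all y-exponents agree and phi(u) > phi(v) for the same reason.
  If w = y_k, equality of y-degrees forces some j_l < k, so u contains no x_m with m \<ge> k; hence
  from x_k on phi(u) is coordinatewise below phi(v), strictly at x_k, and again phi(u) > phi(v).
  So no other monomial of f is mapped to phi(u), which therefore survives in phi(f) as its
  initial monomial. The second claim holds because the sorted index list of phi(u) is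
  i_1..i_s j_1..j_t.\<close>

abbreviation exponent :: "mon \<Rightarrow> var \<Rightarrow> nat" where
  "exponent \<equiv> Poly_Mapping.lookup"

lemma mem_vars [simp]:
  "X i \<in> vars n \<longleftrightarrow> 1 \<le> i \<and> i \<le> n"
  "Y i \<in> vars n \<longleftrightarrow> 1 \<le> i \<and> i \<le> n"
  by (auto simp: vars_def)

lemma rank_inj_on_vars: "inj_on (rank n) (vars n)"
  by (auto simp: vars_def inj_on_def)

lemma ex_rank_greatest:
  assumes "D \<subseteq> vars n" "v \<in> D"
  shows "\<exists>w\<in>D. \<forall>w'\<in>D. rank n w' \<le> rank n w"
proof -
  have "\<forall>w. w \<in> D \<longrightarrow> rank n w < 2 * n + 1"
    using assms(1) by (auto simp: vars_def)
  then show ?thesis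
    using ex_has_greatest_nat[of "\<lambda>w. w \<in> D" v "rank n"] assms(2) by blast
qed

section \<open>The reverse lexicographic order\<close>

lemma revlex_gt_tdeg_le: "revlex_gt n a b \<Longrightarrow> tdeg n b \<le> tdeg n a"
  by (auto simp: revlex_gt_def)

lemma revlex_gtE:
  assumes "revlex_gt n a b" "tdeg n a = tdeg n b"
  obtains v where "v \<in> vars n" "exponent a v < exponent b v"
    "\<And>w. w \<in> vars n \<Longrightarrow> rank n v < rank n w \<Longrightarrow> exponent a w = exponent b w"
proof -
  obtain v where "v \<in> vars n" "exponent a v < exponent b v"
    "\<forall>w\<in>vars n. rank n v < rank n w \<longrightarrow> exponent a w = exponent b w"
    using assms unfolding revlex_gt_def by auto
  then show thesis
    using that by blast
qed

lemma revlex_gt_intro: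
  assumes deg: "tdeg n a = tdeg n b"
    and v: "v \<in> vars n" "exponent a v < exponent b v"
    and above: "\<And>w. w \<in> vars n \<Longrightarrow> rank n v < rank n w \<Longrightarrow> exponent a w \<le> exponent b w"
  shows "revlex_gt n a b"
proof -
  let ?D = "{w \<in> vars n. rank n v \<le> rank n w \<and> exponent a w \<noteq> exponent b w}"
  obtain w where w: "w \<in> ?D" and greatest: "\<And>w'. w' \<in> ?D \<Longrightarrow> rank n w' \<le> rank n w"
    using ex_rank_greatest[of ?D n v] v by auto
  have "exponent a w < exponent b w"
  proof (cases "rank n v = rank n w")
    case True
    then have "w = v" using w v(1) rank_inj_on_vars by (auto dest: inj_onD)
    then show ?thesis using v(2) by simp
  next
    case False
    then show ?thesis using w above[of w] by auto
  qed
  moreover have "\<forall>w'\<in>vars n. rank n w < rank n w' \<longrightarrow> exponent a w' = exponent b w'"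
    using w greatest by fastforce
  ultimately show ?thesis
    using deg w unfolding revlex_gt_def by blast
qed

lemma revlex_asym: "revlex_gt n a b \<Longrightarrow> \<not> revlex_gt n b a"
proof
  assume ab: "revlex_gt n a b" and ba: "revlex_gt n b a"
  then have deg: "tdeg n a = tdeg n b"
    using revlex_gt_tdeg_le le_antisym by blast
  obtain v where v: "v \<in> vars n" "exponent a v < exponent b v"
    "\<And>w. w \<in> vars n \<Longrightarrow> rank n v < rank n w \<Longrightarrow> exponent a w = exponent b w"
    using revlex_gtE[OF ab deg] by blast
  obtain v' where v': "v' \<in> vars n" "exponent b v' < exponent a v'"
    "\<And>w. w \<in> vars n \<Longrightarrow> rank n v' < rank n w \<Longrightarrow> exponent b w = exponent a w"
    using revlex_gtE[OF ba deg[symmetric]] by blast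
  show False
  proof (cases "rank n v" "rank n v'" rule: linorder_cases)
    case less
    then show ?thesis using v(3) v'(1,2) by fastforce
  next
    case equal
    then have "v = v'" using v(1) v'(1) rank_inj_on_vars by (auto dest: inj_onD)
    then show ?thesis using v(2) v'(2) by simp
  next
    case greater
    then show ?thesis using v(1,2) v'(3) by fastforce
  qed
qed

lemma revlex_trans:
  assumes ab: "revlex_gt n a b" and bc: "revlex_gt n b c"
  shows "revlex_gt n a c"
proof (cases "tdeg n c < tdeg n a")
  case True
  then show ?thesis by (simp add: revlex_gt_def)
next
  case False
  then have deg_ab: "tdeg n a = tdeg n b" and deg_bc: "tdeg n b = tdeg n c"
    using revlex_gt_tdeg_le[OF ab] revlex_gt_tdeg_le[OF bc] by simp_all
  then have deg: "tdeg n a = tdeg n c" by simp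
  obtain v where v: "v \<in> vars n" "exponent a v < exponent b v"
    "\<And>w. w \<in> vars n \<Longrightarrow> rank n v < rank n w \<Longrightarrow> exponent a w = exponent b w"
    using revlex_gtE[OF ab deg_ab] by blast
  obtain v' where v': "v' \<in> vars n" "exponent b v' < exponent c v'"
    "\<And>w. w \<in> vars n \<Longrightarrow> rank n v' < rank n w \<Longrightarrow> exponent b w = exponent c w"
    using revlex_gtE[OF bc deg_bc] by blast
  show ?thesis
  proof (cases "rank n v" "rank n v'" rule: linorder_cases)
    case less
    show ?thesis
    proof (rule revlex_gt_intro[OF deg v'(1)])
      show "exponent a v' < exponent c v'"
        using v(3)[OF v'(1) less] v'(2) by simp
      show "exponent a w \<le> exponent c w" if "w \<in> vars n" "rank n v' < rank n w" for w
        using v(3)[of w] v'(3)[of w] that less by simp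
    qed
  next
    case equal
    then have "v = v'" using v(1) v'(1) rank_inj_on_vars by (auto dest: inj_onD)
    show ?thesis
    proof (rule revlex_gt_intro[OF deg v(1)])
      show "exponent a v < exponent c v"
        using v(2) v'(2) \<open>v = v'\<close> by simp
      show "exponent a w \<le> exponent c w" if "w \<in> vars n" "rank n v < rank n w" for w
        using v(3)[of w] v'(3)[of w] that equal by simp
    qed
  next
    case greater
    show ?thesis
    proof (rule revlex_gt_intro[OF deg v(1)])
      show "exponent a v < exponent c v"
        using v(2) v'(3)[OF v(1) greater] by simp
      show "exponent a w \<le> exponent c w" if "w \<in> vars n" "rank n v < rank n w" for w
        using v(3)[of w] v'(3)[of w] that greater by simp
    qed
  qed
qed

lemma revlex_total:
  assumes "is_mon n a" "is_mon n b" "a \<noteq> b"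
  shows "revlex_gt n a b \<or> revlex_gt n b a"
proof (cases "tdeg n a = tdeg n b")
  case False
  then show ?thesis unfolding revlex_gt_def by auto
next
  case deg: True
  let ?D = "{v \<in> vars n. exponent a v \<noteq> exponent b v}"
  obtain v where v: "exponent a v \<noteq> exponent b v"
    using assms(3) by (meson poly_mapping_eqI)
  then have "v \<in> Poly_Mapping.keys a \<union> Poly_Mapping.keys b"
    by (auto simp: in_keys_iff)
  then have "v \<in> vars n"
    using assms(1,2) unfolding is_mon_def by blast
  then obtain w where w: "w \<in> ?D" and greatest: "\<And>w'. w' \<in> ?D \<Longrightarrow> rank n w' \<le> rank n w"
    using ex_rank_greatest[of ?D n v] v by auto
  have agree: "exponent a w' = exponent b w'" if "w' \<in> vars n" "rank n w < rank n w'" for w'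
    using greatest[of w'] that by fastforce
  have w_var: "w \<in> vars n"
    using w by simp
  from w consider "exponent a w < exponent b w" | "exponent b w < exponent a w"
    by fastforce
  then show ?thesis
  proof cases
    case 1
    then have "revlex_gt n a b"
      by (rule revlex_gt_intro[OF deg w_var]) (simp add: agree)
    then show ?thesis ..
  next
    case 2
    then have "revlex_gt n b a"
      by (rule revlex_gt_intro[OF deg[symmetric] w_var]) (simp add: agree)
    then show ?thesis ..
  qed
qed

lemma ex_revlex_greatest:
  assumes "finite A" "A \<noteq> {}" "\<forall>m\<in>A. is_mon n m"
  shows "\<exists>m\<in>A. \<forall>m'\<in>A. m' \<noteq> m \<longrightarrow> revlex_gt n m m'"
  using assms
proof (induction A rule: finite_ne_induct)
  case (singleton x)
  then show ?case by simp
next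
  case (insert x A)
  then obtain m where m: "m \<in> A" "\<forall>m'\<in>A. m' \<noteq> m \<longrightarrow> revlex_gt n m m'" by auto
  have "x \<noteq> m" using insert m by auto
  then have "revlex_gt n x m \<or> revlex_gt n m x" using revlex_total insert m by auto
  then show ?case
    using m revlex_trans by (metis insert_iff)
qed

lemma in_mon_eqI:
  assumes "m \<in> Poly_Mapping.keys f"
    and "\<forall>m'\<in>Poly_Mapping.keys f. m' \<noteq> m \<longrightarrow> revlex_gt n m m'"
  shows "in_mon n f = m"
  unfolding in_mon_def
proof (rule the_equality)
  fix m1
  assume m1: "m1 \<in> Poly_Mapping.keys f \<and> (\<forall>m'\<in>Poly_Mapping.keys f. m' \<noteq> m1 \<longrightarrow> revlex_gt n m1 m')"
  show "m1 = m"
  proof (rule ccontr)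
    assume "m1 \<noteq> m"
    then have "revlex_gt n m1 m" and "revlex_gt n m m1"
      using assms m1 by auto
    then show False
      using revlex_asym by blast
  qed
qed (use assms in blast)

lemma in_mon_greatest:
  assumes "is_poly n f" "f \<noteq> 0"
  shows "in_mon n f \<in> Poly_Mapping.keys f"
    and "\<And>m. m \<in> Poly_Mapping.keys f \<Longrightarrow> m \<noteq> in_mon n f \<Longrightarrow> revlex_gt n (in_mon n f) m"
proof -
  obtain m where "m \<in> Poly_Mapping.keys f" "\<forall>m'\<in>Poly_Mapping.keys f. m' \<noteq> m \<longrightarrow> revlex_gt n m m'"
    using ex_revlex_greatest[of "Poly_Mapping.keys f" n] assms unfolding is_poly_def by auto
  then show "in_mon n f \<in> Poly_Mapping.keys f"
    and "\<And>m. m \<in> Poly_Mapping.keys f \<Longrightarrow> m \<noteq> in_mon n f \<Longrightarrow> revlex_gt n (in_mon n f) m"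
    using in_mon_eqI by metis+
qed

section \<open>The substitution phi\<close>

lemma exponent_phi_mon:
  "exponent (phi_mon m) (X i) = exponent m (X i) + exponent m (Y i)"
  "exponent (phi_mon m) (Y i) = 0"
proof -
  let ?g = "\<lambda>v. case v of X i \<Rightarrow> exponent m (X i) + exponent m (Y i) | Y i \<Rightarrow> 0"
  let ?index = "\<lambda>v. case v of X i \<Rightarrow> i | Y i \<Rightarrow> i"
  have "{v. ?g v \<noteq> 0} \<subseteq> X ` ?index ` Poly_Mapping.keys m"
  proof
    fix v
    assume "v \<in> {v. ?g v \<noteq> 0}"
    then obtain i where i: "v = X i" "X i \<in> Poly_Mapping.keys m \<or> Y i \<in> Poly_Mapping.keys m"
      by (cases v) (auto simp: in_keys_iff)
    then have "i \<in> ?index ` Poly_Mapping.keys m"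
      by (auto intro: rev_image_eqI)
    then show "v \<in> X ` ?index ` Poly_Mapping.keys m"
      using i(1) by blast
  qed
  then have "finite {v. ?g v \<noteq> 0}"
    by (rule finite_subset) auto
  then show "exponent (phi_mon m) (X i) = exponent m (X i) + exponent m (Y i)"
    and "exponent (phi_mon m) (Y i) = 0"
    unfolding phi_mon_def by simp_all
qed

lemma tdeg_phi_mon: "tdeg n (phi_mon m) = tdeg n m"
  by (simp add: tdeg_def xdeg_def ydeg_def exponent_phi_mon sum.distrib)

lemma lookup_phi:
  "Poly_Mapping.lookup (phi f) M =
     (\<Sum>m\<in>{m \<in> Poly_Mapping.keys f. phi_mon m = M}. Poly_Mapping.lookup f m)"
proof -
  have "Poly_Mapping.lookup (phi f) M =
      (\<Sum>m\<in>Poly_Mapping.keys f. if phi_mon m = M then Poly_Mapping.lookup f m else 0)"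
    unfolding phi_def lookup_sum by (intro sum.cong) (auto simp: lookup_single_not_eq)
  then show ?thesis
    by (simp add: sum.inter_filter)
qed

lemma in_mon_phi_eqI:
  fixes f :: "'k::comm_monoid_add mpoly"
  assumes u: "u \<in> Poly_Mapping.keys f"
    and mono: "\<And>v. v \<in> Poly_Mapping.keys f \<Longrightarrow> v \<noteq> u \<Longrightarrow> revlex_gt n (phi_mon u) (phi_mon v)"
  shows "in_mon n (phi f) = phi_mon u"
proof (rule in_mon_eqI)
  have "{m \<in> Poly_Mapping.keys f. phi_mon m = phi_mon u} = {u}"
    using u mono revlex_asym by fastforce
  then show "phi_mon u \<in> Poly_Mapping.keys (phi f)"
    using u by (simp add: lookup_phi in_keys_iff)
  show "\<forall>M\<in>Poly_Mapping.keys (phi f). M \<noteq> phi_mon u \<longrightarrow> revlex_gt n (phi_mon u) M"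
  proof (intro ballI impI)
    fix M
    assume M: "M \<in> Poly_Mapping.keys (phi f)" "M \<noteq> phi_mon u"
    then have "{m \<in> Poly_Mapping.keys f. phi_mon m = M} \<noteq> {}"
      unfolding in_keys_iff lookup_phi by (metis sum.empty)
    then show "revlex_gt n (phi_mon u) M"
      using mono M(2) by blast
  qed
qed

section \<open>Monomials with sorted indices\<close>

lemma exponent_mon_of: "exponent (mon_of vs) w = count (mset vs) w"
  by (induction vs) (auto simp: mon_of_def lookup_add lookup_single)

lemma exponent_mon_of_X_Y:
  "exponent (mon_of (map X is @ map Y js)) (X i) = count (mset is) i"
  "exponent (mon_of (map X is @ map Y js)) (Y i) = count (mset js) i"
  by (simp_all add: exponent_mon_of count_image_mset inj_on_def vimage_def Int_insert_left)

lemma count_xindices: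
  "count (mset (xindices n m)) i = (if 1 \<le> i \<and> i \<le> n then exponent m (X i) else 0)"
  unfolding xindices_def by (induction n) auto

lemma sorted_xindices: "sorted (xindices n m)"
  unfolding xindices_def
proof (induction n)
  case (Suc n)
  have "set (concat (map (\<lambda>i. replicate (exponent m (X i)) i) [1..<n+1])) \<subseteq> {..n}"
    by auto
  then show ?case
    using Suc by (auto simp: sorted_append)
qed simp

lemma xindices_eqI:
  assumes "sorted l" "set l \<subseteq> {1..n}" "\<And>i. exponent m (X i) = count (mset l) i"
  shows "xindices n m = l"
proof -
  have "mset (xindices n m) = mset l"
    using assms(2,3) by (intro multiset_eqI) (auto simp: count_xindices count_eq_zero_iff)
  then show ?thesis
    using assms(1) sorted_xindices by (metis properties_for_sort sorted_sort_id)
qed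

lemma upper_phi_mon_mon_of:
  assumes "sorted (is @ js)" "set (is @ js) \<subseteq> {1..n}"
  shows "upper n (length js) (phi_mon (mon_of (map X is @ map Y js))) = mon_of (map X is @ map Y js)"
proof -
  have "xindices n (phi_mon (mon_of (map X is @ map Y js))) = is @ js"
    using assms by (intro xindices_eqI) (simp_all add: exponent_phi_mon exponent_mon_of_X_Y)
  then show ?thesis
    unfolding upper_def by simp
qed

lemma phi_mon_le_from_Y_difference:
  assumes sorted: "sorted (is @ js)"
    and u: "u = mon_of (map X is @ map Y js)"
    and ydeg: "ydeg n v = ydeg n u"
    and k: "1 \<le> k" "k \<le> n"
    and less: "exponent u (Y k) < exponent v (Y k)"
    and above: "\<And>m. k < m \<Longrightarrow> m \<le> n \<Longrightarrow> exponent u (Y m) = exponent v (Y m)"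
  shows "exponent (phi_mon u) (X k) < exponent (phi_mon v) (X k)"
    and "\<And>m. k < m \<Longrightarrow> m \<le> n \<Longrightarrow> exponent (phi_mon u) (X m) \<le> exponent (phi_mon v) (X m)"
proof -
  have "\<exists>j\<in>set js. j < k"
  proof (rule ccontr)
    assume "\<not> (\<exists>j\<in>set js. j < k)"
    then have "exponent u (Y i) = 0" if "i < k" for i
      using that u by (auto simp: exponent_mon_of_X_Y count_eq_zero_iff)
    then have "ydeg n u = (\<Sum>i\<in>{k..n}. exponent u (Y i))"
      unfolding ydeg_def using k by (intro sum.mono_neutral_right) auto
    also have "\<dots> < (\<Sum>i\<in>{k..n}. exponent v (Y i))"
      using less above k by (intro sum_strict_mono_ex1) (auto simp: le_less)
    also have "\<dots> \<le> ydeg n v"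
      unfolding ydeg_def using k by (intro sum_mono2) auto
    finally show False
      using ydeg by simp
  qed
  then obtain j where j: "j \<in> set js" "j < k" by blast
  have no_X: "exponent u (X m) = 0" if "k \<le> m" for m
  proof -
    have "m \<notin> set is"
    proof
      assume "m \<in> set is"
      then have "m \<le> j"
        using sorted j(1) by (auto simp: sorted_append)
      then show False
        using j(2) that by simp
    qed
    then show ?thesis
      using u by (simp add: exponent_mon_of_X_Y count_eq_zero_iff)
  qed
  show "exponent (phi_mon u) (X k) < exponent (phi_mon v) (X k)"
    using no_X[of k] less by (simp add: exponent_phi_mon)
  show "exponent (phi_mon u) (X m) \<le> exponent (phi_mon v) (X m)" if "k < m" "m \<le> n" for m
    using no_X[of m] above[OF that] that by (simp add: exponent_phi_mon)
qed

lemma revlex_gt_phi_mon: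
  assumes sorted: "sorted (is @ js)"
    and u: "u = mon_of (map X is @ map Y js)"
    and ydeg: "ydeg n v = ydeg n u"
    and gt: "revlex_gt n u v"
  shows "revlex_gt n (phi_mon u) (phi_mon v)"
proof (cases "tdeg n v < tdeg n u")
  case True
  then show ?thesis by (simp add: revlex_gt_def tdeg_phi_mon)
next
  case False
  then have deg: "tdeg n u = tdeg n v"
    using revlex_gt_tdeg_le[OF gt] by simp
  obtain v0 where v0: "v0 \<in> vars n" "exponent u v0 < exponent v v0"
    and agree: "\<And>w. w \<in> vars n \<Longrightarrow> rank n v0 < rank n w \<Longrightarrow> exponent u w = exponent v w"
    using revlex_gtE[OF gt deg] by blast
  obtain k where k: "1 \<le> k" "k \<le> n"
    and less: "exponent (phi_mon u) (X k) < exponent (phi_mon v) (X k)"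
    and below: "\<And>m. k < m \<Longrightarrow> m \<le> n \<Longrightarrow> exponent (phi_mon u) (X m) \<le> exponent (phi_mon v) (X m)"
  proof (cases v0)
    case (X k)
    then have k: "1 \<le> k" "k \<le> n" using v0(1) by auto
    have "exponent u (Y m) = exponent v (Y m)" if "1 \<le> m" "m \<le> n" for m
      using agree[of "Y m"] that k X by simp
    moreover have "exponent u (X m) = exponent v (X m)" if "k < m" "m \<le> n" for m
      using agree[of "X m"] that k X by simp
    ultimately show ?thesis
      using that[OF k] v0(2) k X by (simp add: exponent_phi_mon)
  next
    case (Y k)
    then have k: "1 \<le> k" "k \<le> n" using v0(1) by auto
    have "exponent u (Y m) = exponent v (Y m)" if "k < m" "m \<le> n" for m
      using agree[of "Y m"] that k Y by simp
    then show ?thesis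
      using that[OF k] phi_mon_le_from_Y_difference[OF sorted u ydeg k] v0(2) Y by simp
  qed
  show ?thesis
  proof (rule revlex_gt_intro[OF _ _ less])
    show "tdeg n (phi_mon u) = tdeg n (phi_mon v)"
      using deg by (simp add: tdeg_phi_mon)
    show "X k \<in> vars n" using k by simp
    fix w
    assume "w \<in> vars n" "rank n (X k) < rank n w"
    then show "exponent (phi_mon u) w \<le> exponent (phi_mon v) w"
      using below by (cases w) (auto simp: exponent_phi_mon)
  qed
qed

theorem lemma3p4:
  fixes f :: "'k::field mpoly" and n s t :: nat
  assumes "is_poly n f"
    and "f \<noteq> 0"
    and "bihom n s t f"
    and "\<exists>is js. length is = s \<and> length js = t \<and> sorted (is @ js)
           \<and> set (is @ js) \<subseteq> {1..n}
           \<and> in_mon n f = mon_of (map X is @ map Y js)"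
  shows "in_mon n (phi f) = phi_mon (in_mon n f)
         \<and> in_mon n f = upper n t (phi_mon (in_mon n f))"
proof
  obtain "is" js where ij: "length js = t" "sorted (is @ js)" "set (is @ js) \<subseteq> {1..n}"
    "in_mon n f = mon_of (map X is @ map Y js)"
    using assms(4) by blast
  have keys: "in_mon n f \<in> Poly_Mapping.keys f"
    using in_mon_greatest[OF assms(1,2)] by blast
  show "in_mon n (phi f) = phi_mon (in_mon n f)"
  proof (rule in_mon_phi_eqI[OF keys])
    fix v
    assume v: "v \<in> Poly_Mapping.keys f" "v \<noteq> in_mon n f"
    show "revlex_gt n (phi_mon (in_mon n f)) (phi_mon v)"
    proof (rule revlex_gt_phi_mon[OF ij(2,4)])
      show "ydeg n v = ydeg n (in_mon n f)"
        using assms(3) v(1) keys unfolding bihom_def by simp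
      show "revlex_gt n (in_mon n f) v"
        using in_mon_greatest[OF assms(1,2)] v by blast
    qed
  qed
  show "in_mon n f = upper n t (phi_mon (in_mon n f))"
    using upper_phi_mon_mon_of[OF ij(2,3)] ij(1,4) by simp
qed

end
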